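(* In the standing setup below, if $y\in\Delta^{\mathcal A}$ is an accumulation point of the sequence $\{X_{\mathcal A,w_i}\mid i\in\mathbb{N}\}$ (i.e. for every $\epsilon>0$ and every $N$ there are $i>N$ and $z\in X_{\mathcal A,w_i}$ with $d(y,z)<\epsilon$), then $y\in|\mathcal S|$. Equivalently, for each $y\notin|\mathcal S|$ there are $\epsilon>0$ and $N$ with $d(y,X_{\mathcal A,w_i})>\epsilon$ for all $i>N$.
   Context: Notation: $\mathcal A\subset\mathbb{R}^d$ finite, affinely spanning $\mathbb{R}^d$; $\Delta^{\mathcal A}=\{z\in\mathbb{R}^{\mathcal A}_{\ge0}\mid\sum z_{\mathbf a}=1\}$ with homogeneous coordinates and $\ell_1$ metric $d$; $\Delta^{\mathcal F}$ the face where $z_{\mathbf a}=0$ for $\mathbf a\notin\mathcal F$. For $w\in\mathbb{R}^{\mathcal A}_>$, $X_{\mathcal A,w}$ is the closure in $\Delta^{\mathcal A}$ of $\{[w_{\mathbf a}x^{\mathbf a}\mid\mathbf a\in\mathcal A]\mid x\in\mathbb{R}^d_>\}$, $x^{\mathbf a}=\prod_j\exp(\mathbf a_j\log x_j)$. For $\lambda\in\mathbb{R}^{\mathcal A}$, $\mathcal S_\lambda$ is the regular subdivision whose faces are the sets $\{\mathbf a\mid(\mathbf a,\lambda(\mathbf a))\in F\}$, $F$ an upper face (outward normal with positive last coordinate) of $\mathrm{conv}\{(\mathbf a,\lambda(\mathbf a))\}$. The secondary fan $\Sigma_{\mathcal A}$ consists of the closures $\sigma(\mathcal S)$ of the sets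 $\{\lambda\mid\mathcal S_\lambda=\mathcal S\}$; $\mathcal S_\sigma$ is the subdivision of cone $\sigma$. For a subdivision $\mathcal S$, the geometric realization is $|\mathcal S|=\bigcup_{\mathcal F\text{ face of }\mathcal S}\Delta^{\mathcal F}$. A sequence in a cone $\tau$ is $\sigma$-bounded ($\sigma$ a face of $\tau$) if $\{\psi(v_i)\}$ is bounded for every linear $\psi$ vanishing on $\sigma$. Standing setup: $\{w_i\}\subset\mathbb{R}^{\mathcal A}_>$, $v_i=\mathrm{Log}(w_i)$; there is a cone $\tau\in\Sigma_{\mathcal A}$ containing all $v_i$ with only finitely many $v_i$ in any proper face of $\tau$; a face $\sigma$ of $\tau$ is the minimum face of boundedness (smallest face for which the sequence is bounded) of every subsequence of $\{v_i\}$; $v_i=u_i+\bar v_i$ with $u_i\in\sigma$, $\bar v_i\to v$; $w=\mathrm{Exp}(v)$; $\mathcal S=\mathcal S_\sigma$. *)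

theory Defs
  imports "HOL-Analysis.Analysis"
begin

text \<open>The finite point configuration A in R^d (R^d = an arbitrary
euclidean space 'd) is given by an injective enumeration pt :: 'n => 'd of a finite
index type 'n, A = range pt. Then R^A is real^'n (coordinate i <-> point pt i).
Faces of subdivisions are recorded as sets of indices.\<close>

definition pos_orthant :: "'d::euclidean_space set" where
  "pos_orthant = {x. \<forall>b\<in>Basis. x \<bullet> b > 0}"

definition monomial :: "'d::euclidean_space \<Rightarrow> 'd \<Rightarrow> real" where
  "monomial x a = (\<Prod>b\<in>Basis. exp ((a \<bullet> b) * ln (x \<bullet> b)))"

definition param :: "('n::finite \<Rightarrow> 'd::euclidean_space) \<Rightarrow> real^'n \<Rightarrow> 'd \<Rightarrow> real^'n" where
  "param pt w x = (\<chi> i. w $ i * monomial x (pt i) / (\<Sum>j\<in>UNIV. w $ j * monomial x (pt j)))"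

definition std_simplex :: "(real^'n::finite) set" where
  "std_simplex = {z. (\<forall>i. 0 \<le> z $ i) \<and> (\<Sum>i\<in>UNIV. z $ i) = 1}"

definition l1dist :: "real^'n::finite \<Rightarrow> real^'n \<Rightarrow> real" where
  "l1dist y z = (\<Sum>i\<in>UNIV. \<bar>y $ i - z $ i\<bar>)"

definition toric_var :: "('n::finite \<Rightarrow> 'd::euclidean_space) \<Rightarrow> real^'n \<Rightarrow> (real^'n) set" where
  "toric_var pt w = std_simplex \<inter> closure (param pt w ` pos_orthant)"

definition simplex_face :: "'n set \<Rightarrow> (real^'n::finite) set" where
  "simplex_face F = {z \<in> std_simplex. \<forall>i. i \<notin> F \<longrightarrow> z $ i = 0}"

text \<open>Regular subdivision S_lambda: the faces are the (index sets of) lifted points lying on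
an upper face of conv{(a,lambda(a))}; an upper face, with outward normal (c,c0), c0>0,
scaled to c0 = 1, is the set of maximisers of  c.a + lambda(a).\<close>
definition reg_subdiv :: "('n::finite \<Rightarrow> 'd::euclidean_space) \<Rightarrow> real^'n \<Rightarrow> 'n set set" where
  "reg_subdiv pt lam =
     {F. \<exists>c::'d. F = {i. \<forall>j. c \<bullet> pt j + lam $ j \<le> c \<bullet> pt i + lam $ i}}"

definition sec_cone :: "('n::finite \<Rightarrow> 'd::euclidean_space) \<Rightarrow> 'n set set \<Rightarrow> (real^'n) set" where
  "sec_cone pt S = closure {lam. reg_subdiv pt lam = S}"

definition secondary_fan :: "('n::finite \<Rightarrow> 'd::euclidean_space) \<Rightarrow> (real^'n) set set" where
  "secondary_fan pt = {sec_cone pt S | S. S \<in> range (reg_subdiv pt)}"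

definition subdiv_of_cone :: "('n::finite \<Rightarrow> 'd::euclidean_space) \<Rightarrow> (real^'n) set \<Rightarrow> 'n set set" where
  "subdiv_of_cone pt \<sigma> = (THE S. S \<in> range (reg_subdiv pt) \<and> sec_cone pt S = \<sigma>)"

definition geom_real :: "'n set set \<Rightarrow> (real^'n::finite) set" where
  "geom_real S = (\<Union>F\<in>S. simplex_face F)"

definition Log_vec :: "real^'n::finite \<Rightarrow> real^'n" where
  "Log_vec w = (\<chi> i. ln (w $ i))"

definition Exp_vec :: "real^'n::finite \<Rightarrow> real^'n" where
  "Exp_vec v = (\<chi> i. exp (v $ i))"

definition seq_bounded_wrt :: "(real^'n::finite) set \<Rightarrow> (nat \<Rightarrow> real^'n) \<Rightarrow> bool" where
  "seq_bounded_wrt \<sigma> v \<longleftrightarrow>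
     (\<forall>\<psi>::real^'n \<Rightarrow> real. linear \<psi> \<and> (\<forall>x\<in>\<sigma>. \<psi> x = 0) \<longrightarrow> bounded (range (\<lambda>i. \<psi> (v i))))"

definition min_face_bdd :: "(real^'n::finite) set \<Rightarrow> (real^'n) set \<Rightarrow> (nat \<Rightarrow> real^'n) \<Rightarrow> bool" where
  "min_face_bdd \<tau> \<sigma> v \<longleftrightarrow> \<sigma> face_of \<tau> \<and> seq_bounded_wrt \<sigma> v \<and>
     (\<forall>\<sigma>'. \<sigma>' face_of \<tau> \<and> seq_bounded_wrt \<sigma>' v \<longrightarrow> \<sigma> \<subseteq> \<sigma>')"

end

theory Submission
  imports Defs
begin

text \<open>A cone of the secondary fan consists of the heights whose regular subdivision is
  coarser than a fixed one, and a nonempty face \<sigma> of such a cone is again of this kind: it is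
  the cone of any l in its relative interior, and S = S_l. If y is not in |S|, the support of y
  lies in no face of S_l, and Farkas' lemma produces probability vectors mu, carried by the
  support of y, and n with the same barycenter such that a = mu - n is negative at l and
  nonpositive on \<sigma>. On X_{A,w} the sum of a $ j * log z_j equals a \<bullet> Log w, since log z_j is
  an affine function of pt j plus log w_j, and a has zero mass and zero barycenter. Near y the
  coordinates on the support of mu are bounded below and all are at most 1, so a \<bullet> v_i is
  bounded below for the infinitely many i with X_{A,w_i} close to y. As v_i = u_i + vbar_i with
  u_i \<in> \<sigma>, vbar_i bounded and \<sigma> finitely generated, every linear functional vanishing on the
  face of \<sigma> cut out by a \<bullet> x = 0 is bounded along these i; since l is not in that face, this
  contradicts the minimality of \<sigma>.\<close>

section \<open>Finitely generated cones and Farkas' lemma\<close>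

lemma convex_cone_hull_finite_image_sum:
  fixes f :: "'k \<Rightarrow> 'a::real_vector"
  assumes K: "finite K" and x: "x \<in> convex_cone hull (f ` K)"
  obtains \<alpha> where "\<forall>k\<in>K. 0 \<le> \<alpha> k" "x = (\<Sum>k\<in>K. \<alpha> k *\<^sub>R f k)"
proof -
  let ?C = "{\<Sum>k\<in>K. \<alpha> k *\<^sub>R f k | \<alpha>. \<forall>k\<in>K. 0 \<le> \<alpha> k}"
  have "f ` K \<subseteq> ?C"
  proof
    fix x assume "x \<in> f ` K"
    then obtain k0 where k0: "k0 \<in> K" "x = f k0" by blast
    have "x = (\<Sum>k\<in>K. (if k = k0 then 1 else 0) *\<^sub>R f k)"
      using K k0 by (simp add: if_distrib[of "\<lambda>c. c *\<^sub>R _"] cong: if_cong)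
    then show "x \<in> ?C" by force
  qed
  moreover have "convex_cone ?C"
    unfolding convex_cone_iff
  proof (intro conjI ballI allI impI)
    show "0 \<in> ?C" by (rule CollectI, rule exI[of _ "\<lambda>_. 0"]) simp
  next
    fix x y assume "x \<in> ?C" "y \<in> ?C"
    then obtain \<alpha> \<beta> where "\<forall>k\<in>K. 0 \<le> \<alpha> k" "x = (\<Sum>k\<in>K. \<alpha> k *\<^sub>R f k)"
      and "\<forall>k\<in>K. 0 \<le> \<beta> k" "y = (\<Sum>k\<in>K. \<beta> k *\<^sub>R f k)" by blast
    then show "x + y \<in> ?C"
      by (intro CollectI exI[of _ "\<lambda>k. \<alpha> k + \<beta> k"]) (simp add: scaleR_add_left sum.distrib)
  next
    fix x and c :: real assume "x \<in> ?C" "0 \<le> c"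
    then obtain \<alpha> where "\<forall>k\<in>K. 0 \<le> \<alpha> k" "x = (\<Sum>k\<in>K. \<alpha> k *\<^sub>R f k)" by blast
    with \<open>0 \<le> c\<close> show "c *\<^sub>R x \<in> ?C"
      by (intro CollectI exI[of _ "\<lambda>k. c * \<alpha> k"]) (simp add: scaleR_sum_right)
  qed
  ultimately have "convex_cone hull (f ` K) \<subseteq> ?C" by (rule hull_minimal)
  with x that show ?thesis by blast
qed

lemma farkas_lemma:
  fixes a :: "'k \<Rightarrow> 'a::euclidean_space" and b :: "'k \<Rightarrow> real"
  assumes K: "finite K" and infeasible: "\<nexists>y. \<forall>k\<in>K. a k \<bullet> y \<le> b k"
  obtains \<alpha> where "\<forall>k\<in>K. 0 \<le> \<alpha> k" "(\<Sum>k\<in>K. \<alpha> k *\<^sub>R a k) = 0" "(\<Sum>k\<in>K. \<alpha> k * b k) < 0"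
proof (cases "(0, -1) \<in> convex_cone hull ((\<lambda>k. (a k, b k)) ` K)")
  case True
  then obtain \<alpha> where "\<forall>k\<in>K. 0 \<le> \<alpha> k" and eq: "(0, -1) = (\<Sum>k\<in>K. \<alpha> k *\<^sub>R (a k, b k))"
    using convex_cone_hull_finite_image_sum[OF K] by blast
  moreover have "(\<Sum>k\<in>K. \<alpha> k *\<^sub>R a k) = 0" "(\<Sum>k\<in>K. \<alpha> k * b k) = -1"
    using arg_cong[OF eq, of fst] arg_cong[OF eq, of snd] by (simp_all add: fst_sum snd_sum)
  ultimately show ?thesis using that by simp
next
  case False
  let ?C = "convex_cone hull ((\<lambda>k. (a k, b k)) ` K)"
  have "closed ?C" by (simp add: K closed_convex_cone_hull)
  then obtain w \<beta> where w: "w \<bullet> (0, -1) < \<beta>" and C: "\<forall>x\<in>?C. \<beta> < w \<bullet> x"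
    using separating_hyperplane_closed_point[OF convex_convex_cone_hull _ False] by blast
  have "\<beta> < 0" using C convex_cone_hull_contains_0 by fastforce
  \<comment> \<open>a linear functional bounded below on a cone is nonnegative on it\<close>
  have nonneg: "0 \<le> w \<bullet> x" if "x \<in> ?C" for x
  proof (rule ccontr)
    assume "\<not> 0 \<le> w \<bullet> x"
    then have "(\<beta> / (w \<bullet> x)) *\<^sub>R x \<in> ?C"
      using \<open>\<beta> < 0\<close> that by (intro convex_cone_hull_mul) (auto simp: divide_nonpos_neg)
    with C \<open>\<not> 0 \<le> w \<bullet> x\<close> show False by fastforce
  qed
  obtain c s where ws: "w = (c, s)" by (cases w)
  have "0 < s" using w \<open>\<beta> < 0\<close> ws by simp
  have "a k \<bullet> (- (1 / s) *\<^sub>R c) \<le> b k" if "k \<in> K" for k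
  proof -
    have "0 \<le> c \<bullet> a k + s * b k" using nonneg[OF hull_inc] that ws by auto
    with \<open>0 < s\<close> show ?thesis by (simp add: field_simps inner_commute)
  qed
  with infeasible show ?thesis by blast
qed

lemma polyhedral_cone_finitely_generated:
  fixes K :: "'a::euclidean_space set"
  assumes P: "polyhedron K" and C: "conic K" and ne: "K \<noteq> {}"
  obtains V where "finite V" "K = convex_cone hull V"
proof -
  have "polytope (K \<inter> cbox (-One) One)"
    using P by (simp add: polytope_eq_bounded_polyhedron bounded_Int)
  then obtain V where fV: "finite V" and V: "K \<inter> cbox (-One) One = convex hull V"
    unfolding polytope_def by blast
  have "convex_cone K" unfolding convex_cone_def using ne C polyhedron_imp_convex[OF P] by simp
  then have "convex_cone hull V \<subseteq> K"
    using V hull_subset[of V convex] by (intro hull_minimal) auto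
  moreover have "x \<in> convex_cone hull V" if "x \<in> K" for x
  proof (cases "x = 0")
    case True then show ?thesis by (simp add: convex_cone_hull_contains_0)
  next
    case False
    \<comment> \<open>the unit vector in direction x lies in the box, hence in the convex hull of V\<close>
    define y where "y = (1 / norm x) *\<^sub>R x"
    have "\<bar>y \<bullet> b\<bar> \<le> 1" if "b \<in> Basis" for b
      using Basis_le_norm[OF that, of y] False by (simp add: y_def)
    then have "y \<in> cbox (-One) One" by (simp add: mem_box abs_le_iff inner_minus_left)
    moreover have "y \<in> K" unfolding y_def using C that by (simp add: conicD)
    ultimately have "y \<in> convex_cone hull V"
      using V convex_hull_subset_convex_cone_hull by blast
    then have "norm x *\<^sub>R y \<in> convex_cone hull V" by (rule convex_cone_hull_mul) simp
    then show ?thesis using False by (simp add: y_def)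
  qed
  ultimately show ?thesis using fV that by blast
qed

lemma linear_bounded_on_cone_slab:
  fixes a :: "'a::euclidean_space" and \<psi> :: "'a \<Rightarrow> real"
  assumes V: "finite V" and nonpos: "\<forall>x\<in>convex_cone hull V. a \<bullet> x \<le> 0"
    and lin: "linear \<psi>" and vanish: "\<forall>x\<in>convex_cone hull V. a \<bullet> x = 0 \<longrightarrow> \<psi> x = 0"
  obtains C where "\<forall>u\<in>convex_cone hull V. -K \<le> a \<bullet> u \<longrightarrow> \<bar>\<psi> u\<bar> \<le> C"
proof -
  define C where "C = (\<Sum>g\<in>V. if a \<bullet> g < 0 then K * \<bar>\<psi> g\<bar> / (- (a \<bullet> g)) else 0)"
  have VC: "g \<in> convex_cone hull V" if "g \<in> V" for g using that by (rule hull_inc)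
  have "\<bar>\<psi> u\<bar> \<le> C" if u: "u \<in> convex_cone hull V" and uK: "-K \<le> a \<bullet> u" for u
  proof -
    obtain \<alpha> where \<alpha>: "\<forall>g\<in>V. 0 \<le> \<alpha> g" and ue: "u = (\<Sum>g\<in>V. \<alpha> g *\<^sub>R g)"
      using convex_cone_hull_finite_image_sum[OF V, of u id] u by auto
    have terms_nonpos: "\<alpha> g * (a \<bullet> g) \<le> 0" if "g \<in> V" for g
      using \<alpha> nonpos VC that by (simp add: mult_nonneg_nonpos)
    have "\<bar>\<psi> u\<bar> \<le> (\<Sum>g\<in>V. \<bar>\<alpha> g * \<psi> g\<bar>)"
      unfolding ue by (simp add: linear_sum[OF lin] linear_scale[OF lin] sum_abs)
    also have "\<dots> \<le> C" unfolding C_def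
    proof (rule sum_mono)
      fix g assume g: "g \<in> V"
      show "\<bar>\<alpha> g * \<psi> g\<bar> \<le> (if a \<bullet> g < 0 then K * \<bar>\<psi> g\<bar> / (- (a \<bullet> g)) else 0)"
      proof (cases "a \<bullet> g < 0")
        case True
        \<comment> \<open>all terms of a \<bullet> u are nonpositive, so each one is at least a \<bullet> u \<ge> -K\<close>
        have "- (\<alpha> g * (a \<bullet> g)) \<le> (\<Sum>h\<in>V. - (\<alpha> h * (a \<bullet> h)))"
          using terms_nonpos by (intro member_le_sum[OF g _ V]) auto
        also have "\<dots> = - (a \<bullet> u)" unfolding ue by (simp add: inner_sum_right sum_negf)
        finally have "\<alpha> g \<le> K / (- (a \<bullet> g))" using True uK by (simp add: field_simps)
        then have "\<alpha> g * \<bar>\<psi> g\<bar> \<le> K / (- (a \<bullet> g)) * \<bar>\<psi> g\<bar>" by (rule mult_right_mono) simp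
        then show ?thesis using True \<alpha> g by (simp add: abs_mult)
      next
        case False
        then have "\<psi> g = 0" using nonpos vanish VC[OF g] by force
        then show ?thesis using False by simp
      qed
    qed
    finally show ?thesis .
  qed
  then show ?thesis using that by blast
qed

section \<open>Upper faces of a lifted point configuration\<close>

definition upper_face :: "('n::finite \<Rightarrow> 'd::euclidean_space) \<Rightarrow> real^'n \<Rightarrow> 'd \<Rightarrow> 'n set" where
  "upper_face pt lam c = {i. \<forall>j. c \<bullet> pt j + lam $ j \<le> c \<bullet> pt i + lam $ i}"

definition covered :: "('n::finite \<Rightarrow> 'd::euclidean_space) \<Rightarrow> real^'n \<Rightarrow> 'n set \<Rightarrow> bool" where
  "covered pt lam T \<longleftrightarrow> (\<exists>c. T \<subseteq> upper_face pt lam c)"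

definition barycenter :: "('n::finite \<Rightarrow> 'd::euclidean_space) \<Rightarrow> real^'n \<Rightarrow> 'd" where
  "barycenter pt m = (\<Sum>j\<in>UNIV. m $ j *\<^sub>R pt j)"

lemma reg_subdiv_eq_range_upper_face: "reg_subdiv pt lam = range (upper_face pt lam)"
  unfolding reg_subdiv_def upper_face_def by (rule full_SetCompr_eq)

lemma upper_face_in_reg_subdiv [simp]: "upper_face pt lam c \<in> reg_subdiv pt lam"
  by (simp add: reg_subdiv_eq_range_upper_face)

lemma upper_face_nonempty: "upper_face pt lam c \<noteq> {}"
proof -
  let ?f = "\<lambda>i. c \<bullet> pt i + lam $ i"
  have "Max (range ?f) \<in> range ?f" by (rule Max_in) auto
  then obtain i where "Max (range ?f) = ?f i" by (rule rangeE)
  moreover have "\<forall>j. ?f j \<le> Max (range ?f)" by simp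
  ultimately have "i \<in> upper_face pt lam c" unfolding upper_face_def by (simp only: mem_Collect_eq) metis
  then show ?thesis by blast
qed

lemma upper_face_value_eq:
  "i \<in> upper_face pt lam c \<Longrightarrow> j \<in> upper_face pt lam c \<Longrightarrow> c \<bullet> pt i + lam $ i = c \<bullet> pt j + lam $ j"
  unfolding upper_face_def by (simp add: order_antisym)

lemma upper_face_value_less:
  "i \<in> upper_face pt lam c \<Longrightarrow> j \<notin> upper_face pt lam c \<Longrightarrow> c \<bullet> pt j + lam $ j < c \<bullet> pt i + lam $ i"
  unfolding upper_face_def by (auto simp: not_le intro: less_le_trans)

lemma covered_iff_reg_subdiv: "covered pt lam G \<longleftrightarrow> (\<exists>F\<in>reg_subdiv pt lam. G \<subseteq> F)"
  unfolding covered_def reg_subdiv_eq_range_upper_face by blast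

lemma covered_iff_affine_bound:
  "covered pt lam T \<longleftrightarrow>
     (\<exists>c M. (\<forall>j. c \<bullet> pt j + lam $ j \<le> M) \<and> (\<forall>i\<in>T. M \<le> c \<bullet> pt i + lam $ i))"
proof
  assume "covered pt lam T"
  then obtain c where c: "T \<subseteq> upper_face pt lam c" unfolding covered_def by blast
  obtain i0 where "i0 \<in> upper_face pt lam c" using upper_face_nonempty by blast
  with c have "(\<forall>j. c \<bullet> pt j + lam $ j \<le> c \<bullet> pt i0 + lam $ i0) \<and>
      (\<forall>i\<in>T. c \<bullet> pt i0 + lam $ i0 \<le> c \<bullet> pt i + lam $ i)"
    unfolding upper_face_def by blast
  then show "\<exists>c M. (\<forall>j. c \<bullet> pt j + lam $ j \<le> M) \<and> (\<forall>i\<in>T. M \<le> c \<bullet> pt i + lam $ i)" by blast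
next
  assume "\<exists>c M. (\<forall>j. c \<bullet> pt j + lam $ j \<le> M) \<and> (\<forall>i\<in>T. M \<le> c \<bullet> pt i + lam $ i)"
  then obtain c M where bounds: "\<forall>j. c \<bullet> pt j + lam $ j \<le> M" "\<forall>i\<in>T. M \<le> c \<bullet> pt i + lam $ i"
    by blast
  have "T \<subseteq> upper_face pt lam c"
  proof
    fix i assume "i \<in> T"
    then have "\<forall>j. c \<bullet> pt j + lam $ j \<le> c \<bullet> pt i + lam $ i" using bounds by (meson order_trans)
    then show "i \<in> upper_face pt lam c" unfolding upper_face_def by simp
  qed
  then show "covered pt lam T" unfolding covered_def by blast
qed

lemma inner_vec_eq_sum: "m \<bullet> lam = (\<Sum>j\<in>UNIV. m $ j * lam $ j)"
  by (simp add: inner_vec_def)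

lemma inner_barycenter: "c \<bullet> barycenter pt m = (\<Sum>j\<in>UNIV. m $ j * (c \<bullet> pt j))"
  unfolding barycenter_def by (simp add: inner_sum_right)

lemma barycenter_add: "barycenter pt (x + y) = barycenter pt x + barycenter pt y"
  unfolding barycenter_def by (simp add: scaleR_add_left sum.distrib)

lemma barycenter_diff: "barycenter pt (x - y) = barycenter pt x - barycenter pt y"
  unfolding barycenter_def by (simp add: scaleR_diff_left sum_subtractf)

lemma barycenter_scaleR: "barycenter pt (c *\<^sub>R x) = c *\<^sub>R barycenter pt x"
  unfolding barycenter_def by (simp add: scaleR_sum_right)

text \<open>Geometrically: the lifted barycenter of n lies below the upper hull, which the lifted
  barycenter of m reaches on the face containing T.\<close>
lemma covered_inner_le:
  assumes cov: "covered pt lam T" and m: "m \<in> simplex_face T" and n: "n \<in> std_simplex"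
    and bary: "barycenter pt m = barycenter pt n"
  shows "n \<bullet> lam \<le> m \<bullet> lam"
proof -
  obtain c where c: "T \<subseteq> upper_face pt lam c" using cov covered_def by blast
  obtain i0 where i0: "i0 \<in> upper_face pt lam c" using upper_face_nonempty by blast
  define M where "M = c \<bullet> pt i0 + lam $ i0"
  have "c \<bullet> pt j + lam $ j \<le> M" for j using i0 unfolding upper_face_def M_def by blast
  then have le: "lam $ j \<le> M - c \<bullet> pt j" for j by (simp add: le_diff_eq add.commute)
  have eq: "lam $ j = M - c \<bullet> pt j" if "j \<in> T" for j
    using upper_face_value_eq[of j, OF _ i0] c that unfolding M_def by (simp add: subset_iff)
  have affine: "(\<Sum>j\<in>UNIV. p $ j * (M - c \<bullet> pt j)) = M - c \<bullet> barycenter pt p"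
    if "p \<in> std_simplex" for p
    using that unfolding std_simplex_def inner_barycenter
    by (simp add: right_diff_distrib sum_subtractf sum_distrib_right[symmetric])
  have "n \<bullet> lam \<le> (\<Sum>j\<in>UNIV. n $ j * (M - c \<bullet> pt j))"
    unfolding inner_vec_eq_sum using n le
    by (intro sum_mono mult_left_mono) (auto simp: std_simplex_def)
  also have "\<dots> = (\<Sum>j\<in>UNIV. m $ j * (M - c \<bullet> pt j))"
    using m n bary by (simp add: affine simplex_face_def)
  also have "\<dots> = m \<bullet> lam"
  proof -
    have "m $ j * (M - c \<bullet> pt j) = m $ j * lam $ j" for j
      using m eq[of j] by (cases "j \<in> T") (auto simp: simplex_face_def)
    then show ?thesis unfolding inner_vec_eq_sum by (rule sum.cong[OF refl])
  qed
  finally show ?thesis .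
qed

lemma sum_UNIV_sum_type:
  "(\<Sum>k\<in>UNIV. f k) = (\<Sum>j\<in>UNIV. f (Inl j)) + (\<Sum>i\<in>UNIV. f (Inr i))"
  for f :: "'a::finite + 'b::finite \<Rightarrow> 'c::comm_monoid_add"
  by (simp add: sum.Plus[of UNIV UNIV, unfolded UNIV_Plus_UNIV] comp_def)

lemma not_covered_farkas:
  fixes pt :: "'n::finite \<Rightarrow> 'd::euclidean_space"
  assumes "\<not> covered pt lam T"
  obtains A B :: "real^'n" where "\<forall>j. 0 \<le> A $ j" "\<forall>j. 0 \<le> B $ j" "\<forall>j. j \<notin> T \<longrightarrow> B $ j = 0"
    "barycenter pt A = barycenter pt B" "sum (($) A) UNIV = sum (($) B) UNIV" "B \<bullet> lam < A \<bullet> lam"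
proof -
  \<comment> \<open>the linear system in (c, M) of covered_iff_affine_bound, which has no solution\<close>
  define a :: "'n + 'n \<Rightarrow> 'd \<times> real"
    where "a = case_sum (\<lambda>j. (pt j, -1)) (\<lambda>i. if i \<in> T then (- pt i, 1) else 0)"
  define b :: "'n + 'n \<Rightarrow> real"
    where "b = case_sum (\<lambda>j. - lam $ j) (\<lambda>i. if i \<in> T then lam $ i else 0)"
  have "\<nexists>y. \<forall>k\<in>UNIV. a k \<bullet> y \<le> b k"
  proof
    assume "\<exists>y. \<forall>k\<in>UNIV. a k \<bullet> y \<le> b k"
    then obtain c M where cM: "\<And>k. a k \<bullet> (c, M) \<le> b k" by auto
    have "c \<bullet> pt j + lam $ j \<le> M" for j
      using cM[of "Inl j"] by (simp add: a_def b_def inner_commute)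
    moreover have "M \<le> c \<bullet> pt i + lam $ i" if "i \<in> T" for i
      using cM[of "Inr i"] that by (simp add: a_def b_def inner_commute)
    ultimately show False using assms covered_iff_affine_bound by blast
  qed
  then obtain \<alpha> where \<alpha>: "\<forall>k\<in>UNIV. 0 \<le> \<alpha> k"
    and sa: "(\<Sum>k\<in>UNIV. \<alpha> k *\<^sub>R a k) = 0" and sb: "(\<Sum>k\<in>UNIV. \<alpha> k * b k) < 0"
    using farkas_lemma[of UNIV a b] by auto
  define A :: "real^'n" where "A = (\<chi> j. \<alpha> (Inl j))"
  define B :: "real^'n" where "B = (\<chi> i. if i \<in> T then \<alpha> (Inr i) else 0)"
  have "fst (\<alpha> (Inr i) *\<^sub>R a (Inr i)) = - (B $ i *\<^sub>R pt i)"
    and "snd (\<alpha> (Inr i) *\<^sub>R a (Inr i)) = B $ i" for i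
    by (simp_all add: a_def B_def)
  then have "fst (\<Sum>k\<in>UNIV. \<alpha> k *\<^sub>R a k) = barycenter pt A - barycenter pt B"
    and "snd (\<Sum>k\<in>UNIV. \<alpha> k *\<^sub>R a k) = sum (($) B) UNIV - sum (($) A) UNIV"
    by (simp_all add: fst_sum snd_sum sum_UNIV_sum_type barycenter_def a_def A_def sum_negf)
  then have "barycenter pt A = barycenter pt B" "sum (($) A) UNIV = sum (($) B) UNIV"
    using sa by simp_all
  moreover have "\<alpha> (Inr i) * b (Inr i) = B $ i * lam $ i" for i by (simp add: b_def B_def)
  then have "B \<bullet> lam < A \<bullet> lam"
    using sb by (simp add: sum_UNIV_sum_type b_def A_def inner_vec_eq_sum sum_negf)
  moreover have "\<forall>j. 0 \<le> A $ j" "\<forall>j. 0 \<le> B $ j" "\<forall>j. j \<notin> T \<longrightarrow> B $ j = 0"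
    using \<alpha> by (simp_all add: A_def B_def)
  ultimately show ?thesis using that by blast
qed

lemma not_covered_inner_less:
  fixes pt :: "'n::finite \<Rightarrow> 'd::euclidean_space"
  assumes "\<not> covered pt lam T"
  obtains m n where "m \<in> simplex_face T" "n \<in> std_simplex"
    "barycenter pt m = barycenter pt n" "m \<bullet> lam < n \<bullet> lam"
proof -
  obtain A B :: "real^'n" where A0: "\<forall>j. 0 \<le> A $ j" and B0: "\<forall>j. 0 \<le> B $ j"
    and BT: "\<forall>j. j \<notin> T \<longrightarrow> B $ j = 0" and bary: "barycenter pt A = barycenter pt B"
    and sumAB: "sum (($) A) UNIV = sum (($) B) UNIV" and less: "B \<bullet> lam < A \<bullet> lam"
    using not_covered_farkas[OF assms] by metis
  define s where "s = sum (($) A) UNIV"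
  have "s \<noteq> 0"
  proof
    assume "s = 0"
    then have "A = 0" "B = 0"
      using A0 B0 sumAB by (simp_all add: s_def sum_nonneg_eq_0_iff vec_eq_iff)
    with less show False by simp
  qed
  then have "s > 0" unfolding s_def using A0 by (simp add: sum_nonneg order_le_neq_trans)
  show ?thesis
  proof
    show "(1 / s) *\<^sub>R B \<in> simplex_face T" "(1 / s) *\<^sub>R A \<in> std_simplex"
      using A0 B0 BT \<open>s > 0\<close> sumAB
      by (auto simp: simplex_face_def std_simplex_def s_def sum_divide_distrib[symmetric])
    show "barycenter pt ((1 / s) *\<^sub>R B) = barycenter pt ((1 / s) *\<^sub>R A)"
      by (simp add: barycenter_scaleR bary)
    show "(1 / s) *\<^sub>R B \<bullet> lam < (1 / s) *\<^sub>R A \<bullet> lam"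
      using less \<open>s > 0\<close> by (simp add: divide_strict_right_mono)
  qed
qed

lemma compact_std_simplex: "compact (std_simplex :: (real^'n::finite) set)"
proof -
  have "closed (std_simplex :: (real^'n) set)"
    unfolding std_simplex_def
    by (intro closed_Collect_conj closed_Collect_all closed_Collect_le closed_Collect_eq continuous_intros)
  moreover have "norm z \<le> 1" if "z \<in> std_simplex" for z :: "real^'n"
    using norm_le_l1_cart[of z] that by (simp add: std_simplex_def)
  then have "bounded (std_simplex :: (real^'n) set)" unfolding bounded_iff by blast
  ultimately show ?thesis by (simp add: compact_eq_bounded_closed)
qed

lemma fibre_maximizer_exists:
  assumes "m \<in> std_simplex"
  obtains n where "n \<in> std_simplex" "barycenter pt n = barycenter pt m"
    "\<forall>n'\<in>std_simplex. barycenter pt n' = barycenter pt m \<longrightarrow> n' \<bullet> lam \<le> n \<bullet> lam"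
proof -
  let ?N = "std_simplex \<inter> {n. barycenter pt n = barycenter pt m}"
  have "closed {n. barycenter pt n = barycenter pt m}"
    unfolding barycenter_def by (intro closed_Collect_eq continuous_intros)
  then have "compact ?N" by (intro compact_Int_closed compact_std_simplex)
  moreover have "?N \<noteq> {}" using assms by blast
  moreover have "continuous_on ?N (\<lambda>n. n \<bullet> lam)" by (intro continuous_intros)
  ultimately obtain n where "n \<in> ?N" "\<forall>n'\<in>?N. n' \<bullet> lam \<le> n \<bullet> lam"
    using continuous_attains_sup by blast
  then show ?thesis using that by blast
qed

text \<open>If the support of a maximizer were not covered, moving it a little in the direction
  n2 - m2 of a witness from not_covered_inner_less would increase n \<bullet> lam.\<close>
lemma fibre_maximizer_covered:
  fixes pt :: "'n::finite \<Rightarrow> 'd::euclidean_space"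
  assumes n: "n \<in> std_simplex"
    and max: "\<forall>n'\<in>std_simplex. barycenter pt n' = barycenter pt n \<longrightarrow> n' \<bullet> lam \<le> n \<bullet> lam"
  shows "covered pt lam {j. n $ j \<noteq> 0}"
proof (rule ccontr)
  define T where "T = {j. n $ j \<noteq> 0}"
  assume "\<not> covered pt lam {j. n $ j \<noteq> 0}"
  then obtain m2 n2 where m2: "m2 \<in> simplex_face T" and n2: "n2 \<in> std_simplex"
    and bary2: "barycenter pt m2 = barycenter pt n2" and less: "m2 \<bullet> lam < n2 \<bullet> lam"
    using not_covered_inner_less unfolding T_def by metis
  define e where "e = Min (insert 1 ((($) n) ` T))"
  have n0: "0 \<le> n $ j" for j using n by (simp add: std_simplex_def)
  have "e > 0" unfolding e_def T_def using n0 by (simp add: order_neq_le_trans)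
  have e_le: "e \<le> 1" "\<And>j. j \<in> T \<Longrightarrow> e \<le> n $ j" unfolding e_def by simp_all
  define n' where "n' = n + e *\<^sub>R (n2 - m2)"
  have "n' \<in> std_simplex"
    unfolding std_simplex_def
  proof (intro CollectI conjI allI)
    fix j
    have "m2 $ j \<le> 1"
      using m2 member_le_sum[of j UNIV "($) m2"] by (simp add: simplex_face_def std_simplex_def)
    then have "e * m2 $ j \<le> n $ j"
      using e_le \<open>e > 0\<close> m2 n0[of j] unfolding T_def
      by (cases "n $ j = 0") (auto simp: simplex_face_def intro: order_trans[OF mult_left_le])
    moreover have "0 \<le> e * n2 $ j" using \<open>e > 0\<close> n2 by (simp add: std_simplex_def)
    ultimately show "0 \<le> n' $ j" by (simp add: n'_def algebra_simps)
  next
    show "(\<Sum>j\<in>UNIV. n' $ j) = 1"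
      using n n2 m2 by (simp add: n'_def sum.distrib sum_subtractf sum_distrib_left[symmetric]
          std_simplex_def simplex_face_def)
  qed
  moreover have "barycenter pt n' = barycenter pt n"
    by (simp add: n'_def barycenter_add barycenter_scaleR barycenter_diff bary2)
  moreover have "n \<bullet> lam < n' \<bullet> lam"
    using \<open>e > 0\<close> less by (simp add: n'_def inner_add_left inner_diff_left)
  ultimately show False using max by fastforce
qed

lemma covered_fibre_maximizer:
  fixes pt :: "'n::finite \<Rightarrow> 'd::euclidean_space"
  assumes "m \<in> std_simplex"
  obtains n where "n \<in> std_simplex" "barycenter pt n = barycenter pt m" "covered pt lam {j. n $ j \<noteq> 0}"
    "\<forall>n'\<in>std_simplex. barycenter pt n' = barycenter pt m \<longrightarrow> n' \<bullet> lam \<le> n \<bullet> lam"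
proof -
  obtain n where n: "n \<in> std_simplex" "barycenter pt n = barycenter pt m"
    and max: "\<forall>n'\<in>std_simplex. barycenter pt n' = barycenter pt m \<longrightarrow> n' \<bullet> lam \<le> n \<bullet> lam"
    using fibre_maximizer_exists[OF assms] by blast
  moreover have "covered pt lam {j. n $ j \<noteq> 0}"
    using n max by (intro fibre_maximizer_covered) auto
  ultimately show ?thesis using that by blast
qed

section \<open>Secondary cones\<close>

text \<open>By sec_cone_reg_subdiv below, this is the secondary cone of S_l0, described without
  taking a closure.\<close>
definition coarsening_cone :: "('n::finite \<Rightarrow> 'd::euclidean_space) \<Rightarrow> real^'n \<Rightarrow> (real^'n) set" where
  "coarsening_cone pt l0 = {lam. \<forall>G\<in>reg_subdiv pt l0. covered pt lam G}"

lemma coarsening_cone_self: "l0 \<in> coarsening_cone pt l0"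
  unfolding coarsening_cone_def covered_iff_reg_subdiv by blast

lemma covered_subset: "covered pt lam F \<Longrightarrow> T \<subseteq> F \<Longrightarrow> covered pt lam T"
  unfolding covered_def by (meson order_trans)

lemma covered_if_coarsening_cone:
  assumes "lam \<in> coarsening_cone pt l0" "covered pt l0 T"
  shows "covered pt lam T"
proof -
  obtain F where "F \<in> reg_subdiv pt l0" "T \<subseteq> F" using assms(2) covered_iff_reg_subdiv by blast
  with assms(1) show ?thesis unfolding coarsening_cone_def using covered_subset by blast
qed

lemma coarsening_cone_trans:
  assumes "lam \<in> coarsening_cone pt l1" "l1 \<in> coarsening_cone pt l0"
  shows "lam \<in> coarsening_cone pt l0"
  using covered_if_coarsening_cone[OF assms(1)] assms(2) unfolding coarsening_cone_def by blast

lemma coarsening_cone_cong: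
  "reg_subdiv pt lam = reg_subdiv pt l \<Longrightarrow> lam \<in> coarsening_cone pt l0 \<longleftrightarrow> l \<in> coarsening_cone pt l0"
  unfolding coarsening_cone_def covered_iff_reg_subdiv by simp

lemma coarsening_cone_if_reg_subdiv_subset:
  "reg_subdiv pt l0 \<subseteq> reg_subdiv pt lam \<Longrightarrow> lam \<in> coarsening_cone pt l0"
  unfolding coarsening_cone_def covered_iff_reg_subdiv by blast

lemma polyhedron_covered:
  fixes pt :: "'n::finite \<Rightarrow> 'd::euclidean_space"
  shows "polyhedron {lam. covered pt lam G}"
proof -
  \<comment> \<open>the projection of the polyhedral cone of all (lam, c, M) as in covered_iff_affine_bound\<close>
  define P :: "((real^'n) \<times> ('d \<times> real)) set" where
    "P = (\<Inter>j. {z. (axis j 1, pt j, -1) \<bullet> z \<le> 0}) \<inter> (\<Inter>i\<in>G. {z. (- axis i 1, - pt i, 1) \<bullet> z \<le> 0})"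
  have "polyhedron P" unfolding P_def
    by (intro polyhedron_Int polyhedron_Inter) (auto intro: polyhedron_halfspace_le)
  moreover have "conic P" unfolding P_def conic_def
    by (simp add: mult_nonneg_nonpos)
  moreover have "0 \<in> P" unfolding P_def by simp
  then have "P \<noteq> {}" by blast
  ultimately obtain V where "finite V" "P = convex_cone hull V"
    by (rule polyhedral_cone_finitely_generated)
  then have "polyhedron (fst ` P)"
    by (simp add: convex_cone_hull_linear_image[OF linear_fst, symmetric] polyhedron_convex_cone_hull)
  moreover have memP: "(lam, c, M) \<in> P \<longleftrightarrow>
      (\<forall>j. c \<bullet> pt j + lam $ j \<le> M) \<and> (\<forall>i\<in>G. M \<le> c \<bullet> pt i + lam $ i)" for lam c M
  proof -
    have lower: "(axis j 1, pt j, -1) \<bullet> (lam, c, M) = (c \<bullet> pt j + lam $ j) - M"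
      and upper: "(- axis j 1, - pt j, 1) \<bullet> (lam, c, M) = M - (c \<bullet> pt j + lam $ j)" for j
      by (simp_all add: inner_commute) (simp_all add: cart_eq_inner_axis)
    show ?thesis
      unfolding P_def Int_iff INT_iff mem_Collect_eq lower upper ball_UNIV diff_le_0_iff_le
      by (rule refl)
  qed
  have "lam \<in> fst ` P \<longleftrightarrow> (\<exists>c M. (lam, c, M) \<in> P)" for lam by force
  then have "fst ` P = {lam. covered pt lam G}"
    by (intro set_eqI) (simp only: memP covered_iff_affine_bound mem_Collect_eq)
  ultimately show ?thesis by simp
qed

lemma polyhedron_coarsening_cone: "polyhedron (coarsening_cone pt l0)"
proof -
  have "coarsening_cone pt l0 = (\<Inter>G\<in>reg_subdiv pt l0. {lam. covered pt lam G})"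
    unfolding coarsening_cone_def by blast
  then show ?thesis by (auto intro: polyhedron_Inter polyhedron_covered)
qed

lemma conic_coarsening_cone: "conic (coarsening_cone pt l0)"
proof -
  have "covered pt (c *\<^sub>R lam) G" if "covered pt lam G" "0 \<le> c" for c lam G
  proof (cases "c = 0")
    case True
    have "upper_face pt 0 0 = UNIV" by (simp add: upper_face_def)
    with True show ?thesis unfolding covered_def by (metis scaleR_zero_left subset_UNIV)
  next
    case False
    obtain d where "G \<subseteq> upper_face pt lam d" using \<open>covered pt lam G\<close> covered_def by blast
    moreover have "upper_face pt (c *\<^sub>R lam) (c *\<^sub>R d) = upper_face pt lam d"
    proof -
      have "(c *\<^sub>R d) \<bullet> pt j + (c *\<^sub>R lam) $ j = c * (d \<bullet> pt j + lam $ j)" for j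
        by (simp add: algebra_simps)
      then show ?thesis unfolding upper_face_def using False \<open>0 \<le> c\<close> by simp
    qed
    ultimately show ?thesis unfolding covered_def by metis
  qed
  then show ?thesis unfolding conic_def coarsening_cone_def by blast
qed

lemma closed_coarsening_cone: "closed (coarsening_cone pt l0)"
  by (rule polyhedron_imp_closed[OF polyhedron_coarsening_cone])

lemma coarsening_cone_finitely_generated:
  obtains V where "finite V" "coarsening_cone pt l0 = convex_cone hull V"
  using polyhedral_cone_finitely_generated[OF polyhedron_coarsening_cone conic_coarsening_cone]
    coarsening_cone_self by blast

lemma eventually_at_right_0_pos_affine:
  assumes "0 < a"
  shows "eventually (\<lambda>s. 0 < a + s * b) (at_right (0::real))"
proof -
  have "((\<lambda>s. a + s * b) \<longlongrightarrow> a + 0 * b) (at_right 0)" by (intro tendsto_intros)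
  then show ?thesis using assms order_tendstoD(1) by fastforce
qed

lemma eventually_below_upper_face:
  fixes pt :: "'n::finite \<Rightarrow> 'd::euclidean_space"
  assumes i0: "i0 \<in> upper_face pt l c"
  shows "eventually (\<lambda>s. \<forall>j. j \<notin> upper_face pt l c \<longrightarrow>
      c \<bullet> pt j + l $ j + s * g j < c \<bullet> pt i0 + l $ i0 + s * g i0) (at_right 0)"
proof (rule eventually_all_finite)
  fix j
  show "eventually (\<lambda>s. j \<notin> upper_face pt l c \<longrightarrow>
      c \<bullet> pt j + l $ j + s * g j < c \<bullet> pt i0 + l $ i0 + s * g i0) (at_right 0)"
  proof (cases "j \<in> upper_face pt l c")
    case False
    then have "0 < (c \<bullet> pt i0 + l $ i0) - (c \<bullet> pt j + l $ j)" using upper_face_value_less[OF i0] by simp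
    then have "eventually (\<lambda>s. 0 < ((c \<bullet> pt i0 + l $ i0) - (c \<bullet> pt j + l $ j)) + s * (g i0 - g j))
        (at_right 0)"
      by (rule eventually_at_right_0_pos_affine)
    then show ?thesis by eventually_elim (simp add: algebra_simps)
  qed simp
qed

lemma eventually_upper_face_perturbation:
  fixes pt :: "'n::finite \<Rightarrow> 'd::euclidean_space" and l :: "real^'n" and c :: 'd
  defines "H \<equiv> upper_face pt l c"
  shows "eventually (\<lambda>s. upper_face pt (l + s *\<^sub>R \<mu>) (c + s *\<^sub>R d) =
      {i \<in> H. \<forall>j\<in>H. d \<bullet> pt j + \<mu> $ j \<le> d \<bullet> pt i + \<mu> $ i}) (at_right 0)"
proof -
  define f where "f j = c \<bullet> pt j + l $ j" for j
  define g where "g j = d \<bullet> pt j + \<mu> $ j" for j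
  have val: "(c + s *\<^sub>R d) \<bullet> pt j + (l + s *\<^sub>R \<mu>) $ j = f j + s * g j" for s j
    by (simp add: f_def g_def inner_add_left algebra_simps)
  have fH: "f i = f j" if "i \<in> H" "j \<in> H" for i j
    using upper_face_value_eq that unfolding H_def f_def by blast
  have "Max (g ` H) \<in> g ` H" using upper_face_nonempty unfolding H_def by (intro Max_in) auto
  then obtain i0 where i0: "i0 \<in> H" "g i0 = Max (g ` H)" by (metis imageE)
  then have g_le: "g j \<le> g i0" if "j \<in> H" for j using that by simp
  have "eventually (\<lambda>s. 0 < s \<and> (\<forall>j. j \<notin> H \<longrightarrow> f j + s * g j < f i0 + s * g i0)) (at_right 0)"
    using eventually_at_right_less eventually_below_upper_face[OF i0(1)[unfolded H_def], of g]
    unfolding H_def f_def by (rule eventually_conj)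
  then show ?thesis
  proof eventually_elim
    case (elim s)
    then have s: "0 < s" and below: "\<And>j. j \<notin> H \<Longrightarrow> f j + s * g j < f i0 + s * g i0" by auto
    show ?case
    proof (intro set_eqI iffI)
      fix i assume "i \<in> upper_face pt (l + s *\<^sub>R \<mu>) (c + s *\<^sub>R d)"
      then have le: "f j + s * g j \<le> f i + s * g i" for j unfolding upper_face_def val by simp
      have "i \<in> H" using below[of i] le[of i0] by (cases "i \<in> H") auto
      moreover have "g j \<le> g i" if "j \<in> H" for j
        using le[of j] fH[OF that \<open>i \<in> H\<close>] s by simp
      ultimately show "i \<in> {i \<in> H. \<forall>j\<in>H. d \<bullet> pt j + \<mu> $ j \<le> d \<bullet> pt i + \<mu> $ i}"
        by (simp add: g_def)
    next
      fix i assume "i \<in> {i \<in> H. \<forall>j\<in>H. d \<bullet> pt j + \<mu> $ j \<le> d \<bullet> pt i + \<mu> $ i}"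
      then have iH: "i \<in> H" and g_max: "\<And>j. j \<in> H \<Longrightarrow> g j \<le> g i" by (simp_all add: g_def)
      have "f j + s * g j \<le> f i + s * g i" for j
      proof (cases "j \<in> H")
        case True
        then show ?thesis using fH[OF True iH] g_max[OF True] s by simp
      next
        case False
        have "g i = g i0" using g_max[OF i0(1)] g_le[OF iH] by simp
        then show ?thesis using below[OF False] fH[OF iH i0(1)] by simp
      qed
      then show "i \<in> upper_face pt (l + s *\<^sub>R \<mu>) (c + s *\<^sub>R d)" unfolding upper_face_def val by simp
    qed
  qed
qed

lemma upper_face_in_reg_subdiv_if_affine:
  fixes pt :: "'n::finite \<Rightarrow> 'd::euclidean_space"
  assumes sub: "upper_face pt m c \<subseteq> upper_face pt l0 c0"
    and affine: "\<And>i. i \<in> upper_face pt l0 c0 \<Longrightarrow> m $ i = M - cm \<bullet> pt i"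
  shows "upper_face pt m c \<in> reg_subdiv pt l0"
proof -
  let ?H = "upper_face pt l0 c0" and ?G = "upper_face pt m c"
  have val: "(c - cm) \<bullet> pt i + 0 $ i = (c \<bullet> pt i + m $ i) - M" if "i \<in> ?H" for i
    using affine[OF that] by (simp add: inner_diff_left)
  obtain i1 where i1: "i1 \<in> ?G" using upper_face_nonempty by blast
  have "{i \<in> ?H. \<forall>j\<in>?H. (c - cm) \<bullet> pt j + 0 $ j \<le> (c - cm) \<bullet> pt i + 0 $ i} = ?G"
  proof (intro set_eqI iffI)
    fix i assume "i \<in> {i \<in> ?H. \<forall>j\<in>?H. (c - cm) \<bullet> pt j + 0 $ j \<le> (c - cm) \<bullet> pt i + 0 $ i}"
    then have "i \<in> ?H" "c \<bullet> pt i1 + m $ i1 \<le> c \<bullet> pt i + m $ i" using i1 sub val by auto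
    then show "i \<in> ?G" using i1 unfolding upper_face_def by (auto intro: order_trans)
  next
    fix i assume "i \<in> ?G"
    then show "i \<in> {i \<in> ?H. \<forall>j\<in>?H. (c - cm) \<bullet> pt j + 0 $ j \<le> (c - cm) \<bullet> pt i + 0 $ i}"
      using sub val unfolding upper_face_def by auto
  qed
  then have "eventually (\<lambda>s. upper_face pt l0 (c0 + s *\<^sub>R (c - cm)) = ?G) (at_right 0)"
    using eventually_upper_face_perturbation[where pt = pt and l = l0 and c = c0 and \<mu> = 0 and d = "c - cm"] by simp
  then obtain s where "upper_face pt l0 (c0 + s *\<^sub>R (c - cm)) = ?G"
    using eventually_happens'[OF trivial_limit_at_right_real] by blast
  then show ?thesis by (metis upper_face_in_reg_subdiv)
qed

lemma coarsening_cone_extend: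
  fixes pt :: "'n::finite \<Rightarrow> 'd::euclidean_space"
  assumes lam: "lam \<in> coarsening_cone pt l1"
  obtains e where "0 < e" "l1 + e *\<^sub>R (l1 - lam) \<in> coarsening_cone pt l1"
proof -
  have "eventually (\<lambda>e. G \<in> reg_subdiv pt (l1 + e *\<^sub>R (l1 - lam))) (at_right 0)"
    if G: "G \<in> reg_subdiv pt l1" for G
  proof -
    obtain c1 where G1: "G = upper_face pt l1 c1" using G reg_subdiv_eq_range_upper_face by blast
    obtain c2 where G2: "G \<subseteq> upper_face pt lam c2"
      using lam G unfolding coarsening_cone_def covered_def by blast
    \<comment> \<open>both height functions are constant on G, hence so is the tilt direction\<close>
    have const: "(c1 - c2) \<bullet> pt j + (l1 - lam) $ j = (c1 - c2) \<bullet> pt i + (l1 - lam) $ i"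
      if "i \<in> G" "j \<in> G" for i j
    proof -
      have "c1 \<bullet> pt i + l1 $ i = c1 \<bullet> pt j + l1 $ j" using upper_face_value_eq that G1 by blast
      moreover have "c2 \<bullet> pt i + lam $ i = c2 \<bullet> pt j + lam $ j" using upper_face_value_eq that G2 by blast
      ultimately show ?thesis by (simp add: inner_diff_left)
    qed
    have "{i \<in> G. \<forall>j\<in>G. (c1 - c2) \<bullet> pt j + (l1 - lam) $ j \<le> (c1 - c2) \<bullet> pt i + (l1 - lam) $ i} = G"
      using const by (blast intro: eq_refl)
    with eventually_upper_face_perturbation[where pt = pt and l = l1 and c = c1 and \<mu> = "l1 - lam"
        and d = "c1 - c2"]
    have "eventually (\<lambda>e. upper_face pt (l1 + e *\<^sub>R (l1 - lam)) (c1 + e *\<^sub>R (c1 - c2)) = G)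
        (at_right 0)"
      by (simp add: G1)
    then show ?thesis by eventually_elim (metis upper_face_in_reg_subdiv)
  qed
  then have "eventually (\<lambda>e. 0 < e \<and> (\<forall>G\<in>reg_subdiv pt l1. G \<in> reg_subdiv pt (l1 + e *\<^sub>R (l1 - lam))))
      (at_right 0)"
    by (intro eventually_conj eventually_at_right_less eventually_ball_finite) auto
  then obtain e where "0 < e" "reg_subdiv pt l1 \<subseteq> reg_subdiv pt (l1 + e *\<^sub>R (l1 - lam))"
    using eventually_happens'[OF trivial_limit_at_right_real] by blast
  then show ?thesis using coarsening_cone_if_reg_subdiv_subset that by blast
qed

text \<open>If a face G at (1 - t) x + t y were not covered for x, take a witness mu, nu and a
  maximizer n of the fibre of mu for l0; its support is covered for x and for y, so n beats mu
  at (1 - t) x + t y, contradicting covered_inner_le on G.\<close>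
lemma coarsening_cone_segment:
  fixes pt :: "'n::finite \<Rightarrow> 'd::euclidean_space"
  assumes x: "x \<in> coarsening_cone pt l0" and y: "y \<in> coarsening_cone pt l0" and t: "0 \<le> t" "t < 1"
  shows "x \<in> coarsening_cone pt ((1 - t) *\<^sub>R x + t *\<^sub>R y)"
  unfolding coarsening_cone_def
proof (intro CollectI ballI, rule ccontr)
  fix G assume G: "G \<in> reg_subdiv pt ((1 - t) *\<^sub>R x + t *\<^sub>R y)" and ncov: "\<not> covered pt x G"
  obtain mu nu where mu: "mu \<in> simplex_face G" and nu: "nu \<in> std_simplex"
    and bary: "barycenter pt mu = barycenter pt nu" and less: "mu \<bullet> x < nu \<bullet> x"
    by (rule not_covered_inner_less[OF ncov])
  have "mu \<in> std_simplex" using mu by (simp add: simplex_face_def)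
  then obtain n where n: "n \<in> std_simplex" "barycenter pt n = barycenter pt mu"
    and cov: "covered pt l0 {j. n $ j \<noteq> 0}"
    by (rule covered_fibre_maximizer)
  have n_supp: "n \<in> simplex_face {j. n $ j \<noteq> 0}" using n by (simp add: simplex_face_def)
  have "nu \<bullet> x \<le> n \<bullet> x"
    using covered_inner_le[OF covered_if_coarsening_cone[OF x cov] n_supp nu] n bary by simp
  moreover have "mu \<bullet> y \<le> n \<bullet> y"
    using covered_inner_le[OF covered_if_coarsening_cone[OF y cov] n_supp \<open>mu \<in> std_simplex\<close>] n
    by simp
  moreover have "covered pt ((1 - t) *\<^sub>R x + t *\<^sub>R y) G"
    unfolding covered_iff_reg_subdiv using G by blast
  then have "n \<bullet> ((1 - t) *\<^sub>R x + t *\<^sub>R y) \<le> mu \<bullet> ((1 - t) *\<^sub>R x + t *\<^sub>R y)"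
    by (rule covered_inner_le[OF _ mu n(1) n(2)[symmetric]])
  moreover have "0 < (1 - t) * (n \<bullet> x - mu \<bullet> x)" using less t \<open>nu \<bullet> x \<le> n \<bullet> x\<close> by (simp add: mult_pos_pos)
  moreover have "0 \<le> t * (n \<bullet> y - mu \<bullet> y)" using t \<open>mu \<bullet> y \<le> n \<bullet> y\<close> by (simp add: mult_nonneg_nonneg)
  ultimately have "(1 - t) * (n \<bullet> x - mu \<bullet> x) + t * (n \<bullet> y - mu \<bullet> y) \<le> 0"
    and "0 < (1 - t) * (n \<bullet> x - mu \<bullet> x) + t * (n \<bullet> y - mu \<bullet> y)"
    by (simp_all add: inner_add_right right_diff_distrib)
  then show False by linarith
qed

lemma reg_subdiv_segment_subset:
  fixes pt :: "'n::finite \<Rightarrow> 'd::euclidean_space"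
  assumes l': "l' \<in> coarsening_cone pt l0" and u: "0 \<le> u" "u < 1"
  defines "m \<equiv> (1 - u) *\<^sub>R l0 + u *\<^sub>R l'"
  shows "reg_subdiv pt m \<subseteq> reg_subdiv pt l0"
proof
  have val: "((1 - u) *\<^sub>R c0 + u *\<^sub>R c') \<bullet> pt j + m $ j
      = (1 - u) * (c0 \<bullet> pt j + l0 $ j) + u * (c' \<bullet> pt j + l' $ j)" for c0 c' j
    by (simp add: m_def inner_add_left algebra_simps)
  fix G assume "G \<in> reg_subdiv pt m"
  then obtain c where G: "G = upper_face pt m c" using reg_subdiv_eq_range_upper_face by blast
  have "l0 \<in> coarsening_cone pt m"
    using coarsening_cone_segment[OF coarsening_cone_self l' u] by (simp add: m_def)
  then obtain c0 where GH: "G \<subseteq> upper_face pt l0 c0"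
    using \<open>G \<in> reg_subdiv pt m\<close> unfolding coarsening_cone_def covered_def by blast
  obtain c' where HH: "upper_face pt l0 c0 \<subseteq> upper_face pt l' c'"
    using l' upper_face_in_reg_subdiv unfolding coarsening_cone_def covered_def by blast
  obtain h where h: "h \<in> upper_face pt l0 c0" using upper_face_nonempty by blast
  \<comment> \<open>on the upper face of l0 both l0 and l' are affine, hence so is m\<close>
  have "m $ i = ((1 - u) * (c0 \<bullet> pt h + l0 $ h) + u * (c' \<bullet> pt h + l' $ h))
      - ((1 - u) *\<^sub>R c0 + u *\<^sub>R c') \<bullet> pt i" if "i \<in> upper_face pt l0 c0" for i
  proof -
    have "c0 \<bullet> pt i + l0 $ i = c0 \<bullet> pt h + l0 $ h" "c' \<bullet> pt i + l' $ i = c' \<bullet> pt h + l' $ h"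
      using upper_face_value_eq that h HH by blast+
    then have "((1 - u) *\<^sub>R c0 + u *\<^sub>R c') \<bullet> pt i + m $ i
        = (1 - u) * (c0 \<bullet> pt h + l0 $ h) + u * (c' \<bullet> pt h + l' $ h)"
      using val[of c0 c' i] by simp
    then show ?thesis by linarith
  qed
  then show "G \<in> reg_subdiv pt l0" using upper_face_in_reg_subdiv_if_affine GH G by blast
qed

lemma reg_subdiv_subset_segment:
  fixes pt :: "'n::finite \<Rightarrow> 'd::euclidean_space"
  assumes l': "l' \<in> coarsening_cone pt l0" and u: "0 \<le> u" "u < 1"
  defines "m \<equiv> (1 - u) *\<^sub>R l0 + u *\<^sub>R l'"
  shows "reg_subdiv pt l0 \<subseteq> reg_subdiv pt m"
proof
  have val: "((1 - u) *\<^sub>R c0 + u *\<^sub>R c') \<bullet> pt j + m $ j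
      = (1 - u) * (c0 \<bullet> pt j + l0 $ j) + u * (c' \<bullet> pt j + l' $ j)" for c0 c' j
    by (simp add: m_def inner_add_left algebra_simps)
  fix F assume "F \<in> reg_subdiv pt l0"
  then obtain c0 where F: "F = upper_face pt l0 c0" using reg_subdiv_eq_range_upper_face by blast
  obtain c' where F': "F \<subseteq> upper_face pt l' c'"
    using l' \<open>F \<in> reg_subdiv pt l0\<close> unfolding coarsening_cone_def covered_def by auto
  obtain i0 where i0: "i0 \<in> F" using upper_face_nonempty F by blast
  define f0 where "f0 j = c0 \<bullet> pt j + l0 $ j" for j
  define f' where "f' j = c' \<bullet> pt j + l' $ j" for j
  have "upper_face pt m ((1 - u) *\<^sub>R c0 + u *\<^sub>R c') = F"
  proof (intro set_eqI iffI)
    fix i assume "i \<in> upper_face pt m ((1 - u) *\<^sub>R c0 + u *\<^sub>R c')"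
    then have "(1 - u) * f0 i0 + u * f' i0 \<le> (1 - u) * f0 i + u * f' i"
      unfolding upper_face_def val f0_def f'_def by simp
    moreover have "f' i \<le> f' i0" using F' i0 unfolding upper_face_def f'_def by blast
    ultimately have "(1 - u) * f0 i0 \<le> (1 - u) * f0 i" using u by (smt (verit) mult_left_mono)
    then have "f0 i0 \<le> f0 i" using u by simp
    moreover have "f0 j \<le> f0 i0" for j using i0 F unfolding upper_face_def f0_def by blast
    ultimately show "i \<in> F" unfolding F upper_face_def f0_def by (auto intro: order_trans)
  next
    fix i assume iF: "i \<in> F"
    have "f0 j \<le> f0 i" "f' j \<le> f' i" for j
      using iF F' unfolding F upper_face_def f0_def f'_def by auto
    then have "(1 - u) * f0 j + u * f' j \<le> (1 - u) * f0 i + u * f' i" for j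
      using u by (intro add_mono mult_left_mono) auto
    then show "i \<in> upper_face pt m ((1 - u) *\<^sub>R c0 + u *\<^sub>R c')"
      unfolding upper_face_def val f0_def f'_def by simp
  qed
  then show "F \<in> reg_subdiv pt m" by (metis upper_face_in_reg_subdiv)
qed

lemma reg_subdiv_segment:
  fixes pt :: "'n::finite \<Rightarrow> 'd::euclidean_space"
  assumes "l' \<in> coarsening_cone pt l0" "0 \<le> u" "u < 1"
  shows "reg_subdiv pt ((1 - u) *\<^sub>R l0 + u *\<^sub>R l') = reg_subdiv pt l0"
  using reg_subdiv_segment_subset[OF assms] reg_subdiv_subset_segment[OF assms] by (rule antisym)

lemma sec_cone_reg_subdiv: "sec_cone pt (reg_subdiv pt l0) = coarsening_cone pt l0"
proof
  show "sec_cone pt (reg_subdiv pt l0) \<subseteq> coarsening_cone pt l0"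
    unfolding sec_cone_def
    using coarsening_cone_cong coarsening_cone_self
    by (intro closure_minimal[OF _ closed_coarsening_cone]) blast
  show "coarsening_cone pt l0 \<subseteq> sec_cone pt (reg_subdiv pt l0)"
  proof
    fix l' assume l': "l' \<in> coarsening_cone pt l0"
    have "open_segment l0 l' \<subseteq> {lam. reg_subdiv pt lam = reg_subdiv pt l0}"
      using reg_subdiv_segment[OF l'] by (auto simp: in_segment)
    then have "closure (open_segment l0 l') \<subseteq> sec_cone pt (reg_subdiv pt l0)"
      unfolding sec_cone_def by (rule closure_mono)
    moreover have "l0 \<in> sec_cone pt (reg_subdiv pt l0)"
      unfolding sec_cone_def by (rule closure_subset[THEN subsetD]) simp
    ultimately show "l' \<in> sec_cone pt (reg_subdiv pt l0)"
      by (cases "l0 = l'") auto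
  qed
qed

lemma reg_subdiv_eq_if_sec_cone_eq:
  assumes "sec_cone pt (reg_subdiv pt l1) = sec_cone pt (reg_subdiv pt l2)"
  shows "reg_subdiv pt l1 = reg_subdiv pt l2"
proof -
  have "l2 \<in> coarsening_cone pt l1" "l1 \<in> coarsening_cone pt l2"
    using assms coarsening_cone_self unfolding sec_cone_reg_subdiv by blast+
  then have "reg_subdiv pt ((1 - 1/2) *\<^sub>R l1 + (1/2) *\<^sub>R l2) = reg_subdiv pt l1"
    and "reg_subdiv pt ((1 - 1/2) *\<^sub>R l2 + (1/2) *\<^sub>R l1) = reg_subdiv pt l2"
    by (simp_all only: reg_subdiv_segment[where u = "1/2"])
  then show ?thesis by (simp add: add.commute)
qed

lemma subset_coarsening_cone_rel_interior:
  fixes pt :: "'n::finite \<Rightarrow> 'd::euclidean_space"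
  assumes "convex S" and S_sub: "S \<subseteq> coarsening_cone pt l0" and l1: "l1 \<in> rel_interior S"
  shows "S \<subseteq> coarsening_cone pt l1"
proof
  fix lam assume lam: "lam \<in> S"
  obtain e where "1 < e" and q: "(1 - e) *\<^sub>R lam + e *\<^sub>R l1 \<in> S"
    using convex_rel_interior_if2[OF \<open>convex S\<close> l1] hull_inc[OF lam] by blast
  define t where "t = 1 / e"
  have t: "0 \<le> t" "t < 1" "t * e = 1" using \<open>1 < e\<close> by (simp_all add: t_def)
  have "(1 - t) *\<^sub>R lam + t *\<^sub>R ((1 - e) *\<^sub>R lam + e *\<^sub>R l1) = (1 - t * e) *\<^sub>R lam + (t * e) *\<^sub>R l1"
    by (simp add: algebra_simps)
  then have l1_eq: "(1 - t) *\<^sub>R lam + t *\<^sub>R ((1 - e) *\<^sub>R lam + e *\<^sub>R l1) = l1"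
    by (simp add: t(3))
  have "lam \<in> coarsening_cone pt ((1 - t) *\<^sub>R lam + t *\<^sub>R ((1 - e) *\<^sub>R lam + e *\<^sub>R l1))"
    using S_sub lam q t(1,2) by (intro coarsening_cone_segment) auto
  then show "lam \<in> coarsening_cone pt l1" by (simp only: l1_eq)
qed

lemma coarsening_cone_subset_face:
  fixes pt :: "'n::finite \<Rightarrow> 'd::euclidean_space"
  assumes face: "S face_of coarsening_cone pt l0" and "l1 \<in> S"
  shows "coarsening_cone pt l1 \<subseteq> S"
proof
  fix lam assume lam: "lam \<in> coarsening_cone pt l1"
  have S_sub: "S \<subseteq> coarsening_cone pt l0" using face face_of_imp_subset by blast
  show "lam \<in> S"
  proof (cases "lam = l1")
    case False
    obtain e where "0 < e" and q_in: "l1 + e *\<^sub>R (l1 - lam) \<in> coarsening_cone pt l1"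
      using coarsening_cone_extend[OF lam] by blast
    define q where "q = l1 + e *\<^sub>R (l1 - lam)"
    define u where "u = 1 / (1 + e)"
    have u: "0 < u" "u < 1" "u * (1 + e) = 1" using \<open>0 < e\<close> by (simp_all add: u_def)
    have "(1 - u) *\<^sub>R lam + u *\<^sub>R q = (1 - u * (1 + e)) *\<^sub>R lam + (u * (1 + e)) *\<^sub>R l1"
      by (simp add: q_def algebra_simps)
    then have "l1 = (1 - u) *\<^sub>R lam + u *\<^sub>R q" by (simp add: u(3))
    moreover have "lam \<noteq> q"
    proof
      assume "lam = q"
      then have "(1 + e) *\<^sub>R (lam - l1) = 0" by (simp add: q_def algebra_simps)
      with \<open>0 < e\<close> False show False by simp
    qed
    ultimately have "l1 \<in> open_segment lam q" using u(1,2) unfolding in_segment by blast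
    moreover have "l1 \<in> coarsening_cone pt l0" using \<open>l1 \<in> S\<close> S_sub by blast
    ultimately show ?thesis
      using face_ofD[OF face] coarsening_cone_trans lam q_in \<open>l1 \<in> S\<close> unfolding q_def by blast
  qed (use \<open>l1 \<in> S\<close> in simp)
qed

lemma face_of_coarsening_cone:
  fixes pt :: "'n::finite \<Rightarrow> 'd::euclidean_space"
  assumes face: "S face_of coarsening_cone pt l0" and "S \<noteq> {}"
  obtains l1 where "l1 \<in> S" "S = coarsening_cone pt l1"
proof -
  have "convex S" using face face_of_imp_convex by blast
  then obtain l1 where l1: "l1 \<in> rel_interior S" using rel_interior_eq_empty \<open>S \<noteq> {}\<close> by blast
  then have "l1 \<in> S" using rel_interior_subset by blast
  have "S \<subseteq> coarsening_cone pt l0" using face face_of_imp_subset by blast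
  then have "S \<subseteq> coarsening_cone pt l1" by (rule subset_coarsening_cone_rel_interior[OF \<open>convex S\<close> _ l1])
  moreover have "coarsening_cone pt l1 \<subseteq> S" by (rule coarsening_cone_subset_face[OF face \<open>l1 \<in> S\<close>])
  ultimately show ?thesis using \<open>l1 \<in> S\<close> that by blast
qed

lemma face_of_secondary_cone:
  assumes "\<tau> \<in> secondary_fan pt" "\<sigma> face_of \<tau>" "\<sigma> \<noteq> {}"
  obtains l where "l \<in> \<sigma>" "\<sigma> = coarsening_cone pt l" "subdiv_of_cone pt \<sigma> = reg_subdiv pt l"
proof -
  obtain l0 where "\<tau> = coarsening_cone pt l0"
    using assms(1) unfolding secondary_fan_def by (auto simp: sec_cone_reg_subdiv)
  then obtain l where l: "l \<in> \<sigma>" "\<sigma> = coarsening_cone pt l"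
    using face_of_coarsening_cone assms(2,3) by metis
  have "subdiv_of_cone pt \<sigma> = reg_subdiv pt l"
    unfolding subdiv_of_cone_def
  proof (rule the_equality)
    show "reg_subdiv pt l \<in> range (reg_subdiv pt) \<and> sec_cone pt (reg_subdiv pt l) = \<sigma>"
      using l by (simp add: sec_cone_reg_subdiv)
  next
    fix S assume "S \<in> range (reg_subdiv pt) \<and> sec_cone pt S = \<sigma>"
    then obtain l' where "S = reg_subdiv pt l'"
      and "sec_cone pt (reg_subdiv pt l') = sec_cone pt (reg_subdiv pt l)"
      using l by (auto simp: sec_cone_reg_subdiv)
    then show "S = reg_subdiv pt l" using reg_subdiv_eq_if_sec_cone_eq by blast
  qed
  with l that show ?thesis by blast
qed

section \<open>Toric varieties near a point of the simplex\<close>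

lemma monomial_eq_exp: "monomial x a = exp (a \<bullet> (\<Sum>b\<in>Basis. ln (x \<bullet> b) *\<^sub>R b))"
  unfolding monomial_def by (simp add: exp_sum inner_sum_right mult.commute)

lemma
  fixes pt :: "'n::finite \<Rightarrow> 'd::euclidean_space"
  assumes w: "\<forall>j. 0 < w $ j"
  shows param_pos: "0 < param pt w x $ j" and param_le_1: "param pt w x $ j \<le> 1"
    and ln_param: "ln (param pt w x $ j) = ln (w $ j) + pt j \<bullet> (\<Sum>b\<in>Basis. ln (x \<bullet> b) *\<^sub>R b)
      - ln (\<Sum>k\<in>UNIV. w $ k * monomial x (pt k))"
proof -
  define Z where "Z = (\<Sum>k\<in>UNIV. w $ k * monomial x (pt k))"
  have pos: "0 < w $ k * monomial x (pt k)" for k using w by (simp add: monomial_eq_exp)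
  then have "0 < Z" unfolding Z_def by (simp add: sum_pos)
  have p: "param pt w x $ j = w $ j * monomial x (pt j) / Z" unfolding param_def Z_def by simp
  show "0 < param pt w x $ j" unfolding p using pos \<open>0 < Z\<close> by simp
  have "w $ j * monomial x (pt j) \<le> Z"
    unfolding Z_def using pos by (intro member_le_sum) (auto intro: less_imp_le)
  then show "param pt w x $ j \<le> 1" unfolding p using \<open>0 < Z\<close> by simp
  show "ln (param pt w x $ j) = ln (w $ j) + pt j \<bullet> (\<Sum>b\<in>Basis. ln (x \<bullet> b) *\<^sub>R b)
      - ln (\<Sum>k\<in>UNIV. w $ k * monomial x (pt k))"
    unfolding p Z_def[symmetric] using pos[of j] w \<open>0 < Z\<close>
    by (simp add: ln_div ln_mult monomial_eq_exp less_imp_neq[symmetric])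
qed

text \<open>The logarithm of a point of the parametrized toric variety is an affine function of pt j
  plus Log_vec w; the affine part cancels against distributions of equal barycenter.\<close>
lemma sum_ln_param_diff:
  fixes pt :: "'n::finite \<Rightarrow> 'd::euclidean_space"
  assumes w: "\<forall>j. 0 < w $ j" and mu: "mu \<in> std_simplex" and nu: "nu \<in> std_simplex"
    and bary: "barycenter pt mu = barycenter pt nu"
  shows "(\<Sum>j\<in>UNIV. mu $ j * ln (param pt w x $ j)) - (\<Sum>j\<in>UNIV. nu $ j * ln (param pt w x $ j))
    = (mu - nu) \<bullet> Log_vec w"
proof -
  define L where "L = (\<Sum>b\<in>Basis. ln (x \<bullet> b) *\<^sub>R b)"
  define Z where "Z = (\<Sum>k\<in>UNIV. w $ k * monomial x (pt k))"
  have "(\<Sum>j\<in>UNIV. m $ j * ln (param pt w x $ j)) = m \<bullet> Log_vec w + L \<bullet> barycenter pt m - ln Z"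
    if "m \<in> std_simplex" for m
  proof -
    have "(\<Sum>j\<in>UNIV. m $ j * ln (param pt w x $ j))
        = (\<Sum>j\<in>UNIV. m $ j * ln (w $ j)) + (\<Sum>j\<in>UNIV. m $ j * (L \<bullet> pt j)) - (\<Sum>j\<in>UNIV. m $ j) * ln Z"
      unfolding ln_param[OF w] L_def[symmetric] Z_def[symmetric]
      by (simp add: algebra_simps sum.distrib sum_subtractf sum_distrib_left inner_commute)
    then show ?thesis
      using that by (simp add: inner_vec_eq_sum inner_barycenter Log_vec_def std_simplex_def)
  qed
  then show ?thesis using mu nu bary by (simp add: inner_diff_left)
qed

lemma toric_var_near_param:
  assumes "z \<in> toric_var pt w" and yz: "l1dist y z < m / 2"
  obtains x where "\<And>j. m \<le> y $ j \<Longrightarrow> m / 4 < param pt w x $ j"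
proof -
  have "0 \<le> l1dist y z" unfolding l1dist_def by (simp add: sum_nonneg)
  then have "0 < m" using yz by simp
  have "z \<in> closure (param pt w ` pos_orthant)" using assms(1) unfolding toric_var_def by blast
  then obtain x where zx: "dist (param pt w x) z < m / 4"
    using \<open>0 < m\<close> unfolding closure_approachable by (metis imageE zero_less_divide_iff zero_less_numeral)
  have "m / 4 < param pt w x $ j" if "m \<le> y $ j" for j
  proof -
    have "\<bar>y $ j - z $ j\<bar> \<le> l1dist y z" unfolding l1dist_def by (rule member_le_sum) auto
    moreover have "\<bar>param pt w x $ j - z $ j\<bar> \<le> dist (param pt w x) z"
      using component_le_norm_cart[of "param pt w x - z" j] by (simp add: dist_norm)
    ultimately show ?thesis using yz zx that by linarith
  qed
  then show ?thesis using that by blast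
qed

text \<open>Points of the toric variety near y have coordinates bounded below on the support of mu
  and at most 1 everywhere, so sum_ln_param_diff bounds (mu - nu) \<bullet> Log_vec w from below.\<close>
lemma toric_var_near_lower_bound:
  fixes pt :: "'n::finite \<Rightarrow> 'd::euclidean_space"
  assumes mu: "mu \<in> std_simplex" and supp: "\<And>j. mu $ j \<noteq> 0 \<Longrightarrow> 0 < y $ j"
    and nu: "nu \<in> std_simplex" and bary: "barycenter pt mu = barycenter pt nu"
  obtains \<epsilon> K where "0 < \<epsilon>"
    "\<And>w z. \<forall>j. 0 < w $ j \<Longrightarrow> z \<in> toric_var pt w \<Longrightarrow> l1dist y z < \<epsilon> \<Longrightarrow> K \<le> (mu - nu) \<bullet> Log_vec w"
proof
  define m where "m = Min (insert 1 {y $ j | j. mu $ j \<noteq> 0})"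
  have fin: "finite (insert 1 {y $ j | j. mu $ j \<noteq> 0})" by simp
  then have "0 < m" using supp unfolding m_def by (auto simp: Min_gr_iff)
  have m_le: "m \<le> y $ j" if "mu $ j \<noteq> 0" for j
    unfolding m_def using fin that by (intro Min_le) auto
  show "0 < m / 2" using \<open>0 < m\<close> by simp
  fix w z assume w: "\<forall>j. 0 < w $ j" and "z \<in> toric_var pt w" and yz: "l1dist y z < m / 2"
  then obtain x where "\<And>j. m \<le> y $ j \<Longrightarrow> m / 4 < param pt w x $ j"
    using toric_var_near_param by blast
  define z' where "z' = param pt w x"
  have z'_lower: "m / 4 < z' $ j" if "mu $ j \<noteq> 0" for j
    using \<open>\<And>j. m \<le> y $ j \<Longrightarrow> m / 4 < param pt w x $ j\<close> m_le[OF that] unfolding z'_def by blast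
  have "mu $ j * ln (m / 4) \<le> mu $ j * ln (z' $ j)" for j
  proof (cases "mu $ j = 0")
    case False
    then have "ln (m / 4) \<le> ln (z' $ j)" using z'_lower[OF False] \<open>0 < m\<close> by simp
    moreover have "0 \<le> mu $ j" using mu by (simp add: std_simplex_def)
    ultimately show ?thesis by (rule mult_left_mono)
  qed simp
  then have "(\<Sum>j\<in>UNIV. mu $ j * ln (m / 4)) \<le> (\<Sum>j\<in>UNIV. mu $ j * ln (z' $ j))"
    by (rule sum_mono)
  moreover have "(\<Sum>j\<in>UNIV. mu $ j * ln (m / 4)) = ln (m / 4)"
    using mu by (simp add: std_simplex_def sum_distrib_right[symmetric])
  moreover have "nu $ j * ln (z' $ j) \<le> 0" for j
  proof (rule mult_nonneg_nonpos)
    show "0 \<le> nu $ j" using nu by (simp add: std_simplex_def)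
    show "ln (z' $ j) \<le> 0"
      using param_pos[OF w, where pt = pt and x = x and j = j] param_le_1[OF w, where pt = pt and x = x and j = j]
      unfolding z'_def by simp
  qed
  then have "(\<Sum>j\<in>UNIV. nu $ j * ln (z' $ j)) \<le> 0" by (simp add: sum_nonpos)
  ultimately show "ln (m / 4) \<le> (mu - nu) \<bullet> Log_vec w"
    using sum_ln_param_diff[OF w mu nu bary, of x] unfolding z'_def by linarith
qed

section \<open>Limits of toric varieties\<close>

text \<open>The support of y lies in no face of S_l; mu is a witness for this, and n a maximizer of the
  fibre of mu for l, whose support is covered for every point of the secondary cone of l.\<close>
lemma not_in_geom_real_reg_subdiv:
  fixes pt :: "'n::finite \<Rightarrow> 'd::euclidean_space"
  assumes y: "y \<in> std_simplex" "y \<notin> geom_real (reg_subdiv pt l)"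
  obtains mu n where "mu \<in> std_simplex" "\<And>j. mu $ j \<noteq> 0 \<Longrightarrow> 0 < y $ j"
    "n \<in> std_simplex" "barycenter pt mu = barycenter pt n"
    "(mu - n) \<bullet> l < 0" "\<forall>x\<in>coarsening_cone pt l. (mu - n) \<bullet> x \<le> 0"
proof -
  define T where "T = {j. y $ j \<noteq> 0}"
  have "\<not> covered pt l T"
  proof
    assume "covered pt l T"
    then obtain c where "T \<subseteq> upper_face pt l c" unfolding covered_def by blast
    then have "y \<in> simplex_face (upper_face pt l c)"
      using y(1) unfolding simplex_face_def T_def by auto
    with y(2) show False unfolding geom_real_def by auto
  qed
  then obtain mu nu where mu: "mu \<in> simplex_face T" and nu: "nu \<in> std_simplex"
    and bary: "barycenter pt mu = barycenter pt nu" and less: "mu \<bullet> l < nu \<bullet> l"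
    by (rule not_covered_inner_less)
  have "mu \<in> std_simplex" using mu by (simp add: simplex_face_def)
  then obtain n where n: "n \<in> std_simplex" "barycenter pt n = barycenter pt mu"
    and cov: "covered pt l {j. n $ j \<noteq> 0}"
    and max: "\<forall>n'\<in>std_simplex. barycenter pt n' = barycenter pt mu \<longrightarrow> n' \<bullet> l \<le> n \<bullet> l"
    by (rule covered_fibre_maximizer)
  show ?thesis
  proof
    show "mu \<in> std_simplex" "n \<in> std_simplex" "barycenter pt mu = barycenter pt n"
      using \<open>mu \<in> std_simplex\<close> n by simp_all
    show "0 < y $ j" if "mu $ j \<noteq> 0" for j
    proof -
      have "y $ j \<noteq> 0" using mu that unfolding simplex_face_def T_def by auto
      moreover have "0 \<le> y $ j" using y(1) by (simp add: std_simplex_def)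
      ultimately show ?thesis by simp
    qed
    have "nu \<bullet> l \<le> n \<bullet> l" using max nu bary by simp
    with less show "(mu - n) \<bullet> l < 0" by (simp add: inner_diff_left)
    show "\<forall>x\<in>coarsening_cone pt l. (mu - n) \<bullet> x \<le> 0"
    proof
      fix x assume "x \<in> coarsening_cone pt l"
      then have "covered pt x {j. n $ j \<noteq> 0}" using cov by (rule covered_if_coarsening_cone)
      moreover have "n \<in> simplex_face {j. n $ j \<noteq> 0}" using n by (simp add: simplex_face_def)
      ultimately have "mu \<bullet> x \<le> n \<bullet> x"
        using covered_inner_le \<open>mu \<in> std_simplex\<close> n(2) by metis
      then show "(mu - n) \<bullet> x \<le> 0" by (simp add: inner_diff_left)
    qed
  qed
qed

lemma toric_var_escape_direction:
  fixes pt :: "'n::finite \<Rightarrow> 'd::euclidean_space"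
  assumes "y \<in> std_simplex" "y \<notin> geom_real (reg_subdiv pt l)"
  obtains \<epsilon> a K where "0 < \<epsilon>" "a \<bullet> l < 0" "\<forall>x\<in>coarsening_cone pt l. a \<bullet> x \<le> 0"
    "\<And>w z. \<forall>j. 0 < w $ j \<Longrightarrow> z \<in> toric_var pt w \<Longrightarrow> l1dist y z < \<epsilon> \<Longrightarrow> K \<le> a \<bullet> Log_vec w"
proof -
  obtain mu n where mu: "mu \<in> std_simplex" "\<And>j. mu $ j \<noteq> 0 \<Longrightarrow> 0 < y $ j"
    and n: "n \<in> std_simplex" "barycenter pt mu = barycenter pt n"
    and neg: "(mu - n) \<bullet> l < 0" and nonpos: "\<forall>x\<in>coarsening_cone pt l. (mu - n) \<bullet> x \<le> 0"
    using not_in_geom_real_reg_subdiv[OF assms] by blast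
  obtain \<epsilon> K where "0 < \<epsilon>" and K: "\<And>w z. \<forall>j. 0 < w $ j \<Longrightarrow> z \<in> toric_var pt w \<Longrightarrow>
      l1dist y z < \<epsilon> \<Longrightarrow> K \<le> (mu - n) \<bullet> Log_vec w"
    using toric_var_near_lower_bound[OF mu n] by blast
  show ?thesis by (rule that[OF \<open>0 < \<epsilon>\<close> neg nonpos K])
qed

lemma seq_bounded_wrt_cone_slab:
  fixes us vb :: "nat \<Rightarrow> real^'n::finite"
  assumes V: "finite V" and nonpos: "\<forall>x\<in>convex_cone hull V. a \<bullet> x \<le> 0"
    and us: "\<And>k. us k \<in> convex_cone hull V" and vb: "bounded (range vb)"
    and lower: "\<And>k. K \<le> a \<bullet> (us k + vb k)"
  shows "seq_bounded_wrt (convex_cone hull V \<inter> {x. a \<bullet> x = 0}) (\<lambda>k. us k + vb k)"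
  unfolding seq_bounded_wrt_def
proof (intro allI impI)
  fix \<psi> :: "real^'n \<Rightarrow> real"
  assume "linear \<psi> \<and> (\<forall>x\<in>convex_cone hull V \<inter> {x. a \<bullet> x = 0}. \<psi> x = 0)"
  then have lin: "linear \<psi>" and vanish: "\<forall>x\<in>convex_cone hull V. a \<bullet> x = 0 \<longrightarrow> \<psi> x = 0" by auto
  obtain B where B: "\<And>k. norm (vb k) \<le> B" using vb unfolding bounded_iff by blast
  obtain P where "0 < P" and P: "\<And>x. norm (\<psi> x) \<le> P * norm x" using linear_bounded_pos[OF lin] by blast
  obtain C where C: "\<forall>u\<in>convex_cone hull V. - (norm a * B - K) \<le> a \<bullet> u \<longrightarrow> \<bar>\<psi> u\<bar> \<le> C"
    using linear_bounded_on_cone_slab[OF V nonpos lin vanish] by blast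
  have "\<bar>\<psi> (us k + vb k)\<bar> \<le> C + P * B" for k
  proof -
    have "\<bar>a \<bullet> vb k\<bar> \<le> norm a * norm (vb k)" by (rule Cauchy_Schwarz_ineq2)
    also have "\<dots> \<le> norm a * B" by (rule mult_left_mono[OF B norm_ge_zero])
    finally have "- (norm a * B - K) \<le> a \<bullet> us k" using lower[of k] by (simp add: inner_add_right)
    then have "\<bar>\<psi> (us k)\<bar> \<le> C" using C us by blast
    moreover have "\<bar>\<psi> (vb k)\<bar> \<le> P * norm (vb k)" using P[of "vb k"] by simp
    moreover have "P * norm (vb k) \<le> P * B" using B[of k] \<open>0 < P\<close> by (simp add: mult_left_mono)
    ultimately show ?thesis by (simp add: linear_add[OF lin])
  qed
  then show "bounded (range (\<lambda>k. \<psi> (us k + vb k)))" unfolding bounded_iff by auto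
qed

theorem mainTheorem10:
  fixes pt :: "'n::finite \<Rightarrow> 'd::euclidean_space"
    and ws :: "nat \<Rightarrow> real^'n" and vs us vbar :: "nat \<Rightarrow> real^'n"
    and \<tau> \<sigma> :: "(real^'n) set" and v w y :: "real^'n"
  assumes inj: "inj pt"
    and span: "affine hull (range pt) = UNIV"
    and wpos: "\<And>i j. ws i $ j > 0"
    and vdef: "\<And>i. vs i = Log_vec (ws i)"
    and tau: "\<tau> \<in> secondary_fan pt"
    and vin: "\<And>i. vs i \<in> \<tau>"
    and proper: "\<And>F. F face_of \<tau> \<Longrightarrow> F \<noteq> \<tau> \<Longrightarrow> finite {i. vs i \<in> F}"
    and sigma: "\<And>r. strict_mono r \<Longrightarrow> min_face_bdd \<tau> \<sigma> (vs \<circ> r)"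
    and decomp: "\<And>i. vs i = us i + vbar i"
    and uin: "\<And>i. us i \<in> \<sigma>"
    and lim: "vbar \<longlonglongrightarrow> v"
    and wdef: "w = Exp_vec v"
    and ysimp: "y \<in> std_simplex"
    and acc: "\<forall>\<epsilon>>0. \<forall>N. \<exists>i>N. \<exists>z\<in>toric_var pt (ws i). l1dist y z < \<epsilon>"
  shows "y \<in> geom_real (subdiv_of_cone pt \<sigma>)"
proof (rule ccontr)
  assume y_notin: "y \<notin> geom_real (subdiv_of_cone pt \<sigma>)"
  have "\<sigma> face_of \<tau>" using sigma[OF strict_mono_id] unfolding min_face_bdd_def by blast
  moreover have "\<sigma> \<noteq> {}" using uin by blast
  ultimately obtain l where l: "l \<in> \<sigma>" "\<sigma> = coarsening_cone pt l" "subdiv_of_cone pt \<sigma> = reg_subdiv pt l"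
    using face_of_secondary_cone[OF tau] by metis
  then have y_notin_l: "y \<notin> geom_real (reg_subdiv pt l)" using y_notin by simp
  obtain \<epsilon> a K where "0 < \<epsilon>" "a \<bullet> l < 0" and "\<forall>x\<in>coarsening_cone pt l. a \<bullet> x \<le> 0"
    and K: "\<And>w z. \<forall>j. 0 < w $ j \<Longrightarrow> z \<in> toric_var pt w \<Longrightarrow> l1dist y z < \<epsilon> \<Longrightarrow> K \<le> a \<bullet> Log_vec w"
    using toric_var_escape_direction[OF ysimp y_notin_l] by metis
  then have nonpos: "\<forall>x\<in>\<sigma>. a \<bullet> x \<le> 0" using l(2) by simp
  have "infinite {i. K \<le> a \<bullet> vs i}"
    unfolding infinite_nat_iff_unbounded using acc \<open>0 < \<epsilon>\<close> K wpos unfolding vdef by blast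
  then obtain r :: "nat \<Rightarrow> nat" where r: "strict_mono r" and Kr: "\<And>k. K \<le> a \<bullet> vs (r k)"
    using infinite_enumerate by blast
  obtain V where V: "finite V" "\<sigma> = convex_cone hull V"
    using coarsening_cone_finitely_generated l(2) by metis
  define F where "F = \<sigma> \<inter> {x. a \<bullet> x = 0}"
  have "seq_bounded_wrt F (vs \<circ> r)"
    using seq_bounded_wrt_cone_slab[OF V(1), of a "us \<circ> r" "vbar \<circ> r" K] nonpos uin Kr
      convergent_imp_bounded[OF LIMSEQ_subseq_LIMSEQ[OF lim r]]
    unfolding F_def V(2) decomp comp_def by simp
  moreover have "F face_of \<tau>"
    using face_of_Int_supporting_hyperplane_le[OF face_of_imp_convex[OF \<open>\<sigma> face_of \<tau>\<close>]] nonpos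
      face_of_trans[OF _ \<open>\<sigma> face_of \<tau>\<close>] unfolding F_def by blast
  moreover have "\<not> \<sigma> \<subseteq> F" using l(1) \<open>a \<bullet> l < 0\<close> unfolding F_def by auto
  ultimately show False using sigma[OF r] unfolding min_face_bdd_def by blast
qed

end
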